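(* Assume (A), (R), (S) and let $c$ be a global solution of (E) with initial condition $c^{\mathrm{in}}\in\ell^1_1$. Then $$\mathfrak m_1(t)=\sum_{k=1}^\infty kc_k(t)\le\max\{\mathfrak m_1^{\mathrm{in}},\widehat{\mathfrak s}_1\}\quad\text{for all }t\ge0.$$ Moreover there exists $T>0$, depending only on $\mathfrak m_1^{\mathrm{in}}$, $\widehat{\mathfrak s}_1$ and $R_*$, such that $\mathfrak m_1(t)\le 2\widehat{\mathfrak s}_1$ for all $t\ge T$.
   Context: Throughout, $\mathbb N=\{1,2,\dots\}$. We consider the forced discrete coagulation equation $$\frac{d}{dt}c_k=\frac12\sum_{\ell=1}^{k-1}a_{k-\ell,\ell}c_{k-\ell}c_\ell-c_k\sum_{\ell=1}^{\infty}a_{k,\ell}c_\ell+s_k-r_kc_k,\qquad k\in\mathbb N,\tag{E}$$ with real coefficients satisfying the standing assumptions: (A) $a_{k,\ell}=a_{\ell,k}$ and $0\le a_{k,\ell}\le A_*(k^\alpha\ell^\beta+k^\beta\ell^\alpha)$ for all $k,\ell\in\mathbb N$, with constants $A_*>0$, $\alpha,\beta\in[0,1]$, $\alpha\le\beta$; (R) $r_k\ge R_*k^\gamma$ for all $k\in\mathbb N$, with $R_*>0$ and $\gamma>\max\{0,\alpha+\beta-1\}$; (S) $s_k\ge 0$ for all $k$, and for every $\mu\ge0$ there is $\mathfrak s_\mu>0$ with $\sum_{k\ge1}k^\mu s_k\le\mathfrak s_\mu$. Write $\widehat A_*=A_*/R_*$ and $\widehat{\mathfrak s}_\mu=\mathfrak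 s_\mu/R_*$. For $\mu\ge0$, $\ell^1_\mu$ is the set of sequences $(c_k)_{k\in\mathbb N}$ with $c_k\in[0,\infty)$ and $\sum_k k^\mu c_k<\infty$. Solution: a sequence $c=(c_k)_{k\in\mathbb N}$ of continuous functions $c_k:[0,T)\to[0,\infty)$ is a solution of (E) on $[0,T)$ with initial condition $c^{\mathrm{in}}\in\ell^1_1$ if (i) for each $k$, (E) holds for all $t\in(0,T)$; (ii) for each $\mu\ge1$, $c\in L^\infty([0,T),\ell^1_1)\cap C^1((0,T),\ell^1_\mu)$; (iii) $c_k(0)=c_k^{\mathrm{in}}$ for all $k$. It is a global solution if $T=\infty$. Moments: $\mathfrak m_\mu(t)=\sum_k k^\mu c_k(t)$, $\mathfrak m_1^{\mathrm{in}}=\sum_k k c_k^{\mathrm{in}}$. *)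

theory Defs
  imports Complex_Main
begin

text \<open>Sequences indexed by the positive integers are modelled as functions
  nat => real; the value at index 0 is ignored everywhere (note that
  0 powr mu = 0 in Isabelle, so index 0 never contributes to a weighted sum).\<close>

definition wsum :: "real \<Rightarrow> (nat \<Rightarrow> real) \<Rightarrow> real" where
  "wsum \<mu> x = (\<Sum>k. real k powr \<mu> * x k)"

abbreviation moment :: "real \<Rightarrow> (nat \<Rightarrow> real) \<Rightarrow> real" where
  "moment \<mu> x \<equiv> wsum \<mu> x"

definition in_l1 :: "real \<Rightarrow> (nat \<Rightarrow> real) \<Rightarrow> bool" where
  "in_l1 \<mu> x \<longleftrightarrow> (\<forall>k\<ge>1. x k \<ge> 0) \<and> summable (\<lambda>k. real k powr \<mu> * x k)"

definition l1norm :: "real \<Rightarrow> (nat \<Rightarrow> real) \<Rightarrow> real" where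
  "l1norm \<mu> x = (\<Sum>k. real k powr \<mu> * \<bar>x k\<bar>)"

definition l1fin :: "real \<Rightarrow> (nat \<Rightarrow> real) \<Rightarrow> bool" where
  "l1fin \<mu> x \<longleftrightarrow> summable (\<lambda>k. real k powr \<mu> * \<bar>x k\<bar>)"

text \<open>Standing assumptions (A), (R), (S). The constants frak_s mu are given by fs.\<close>
definition standing_assms ::
  "real \<Rightarrow> real \<Rightarrow> real \<Rightarrow> real \<Rightarrow> real \<Rightarrow> (nat \<Rightarrow> nat \<Rightarrow> real) \<Rightarrow>
   (nat \<Rightarrow> real) \<Rightarrow> (nat \<Rightarrow> real) \<Rightarrow> (real \<Rightarrow> real) \<Rightarrow> bool" where
  "standing_assms Astar \<alpha> \<beta> \<gamma> Rstar a r s fs \<longleftrightarrow>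
     Astar > 0 \<and> 0 \<le> \<alpha> \<and> \<alpha> \<le> \<beta> \<and> \<beta> \<le> 1 \<and>
     (\<forall>k\<ge>1. \<forall>l\<ge>1. a k l = a l k \<and> 0 \<le> a k l \<and>
        a k l \<le> Astar * (real k powr \<alpha> * real l powr \<beta> + real k powr \<beta> * real l powr \<alpha>)) \<and>
     Rstar > 0 \<and> \<gamma> > max 0 (\<alpha> + \<beta> - 1) \<and>
     (\<forall>k\<ge>1. r k \<ge> Rstar * real k powr \<gamma>) \<and>
     (\<forall>k\<ge>1. s k \<ge> 0) \<and>
     (\<forall>\<mu>\<ge>0. fs \<mu> > 0 \<and> summable (\<lambda>k. real k powr \<mu> * s k) \<and> wsum \<mu> s \<le> fs \<mu>)"

definition coag_rhs ::
  "(nat \<Rightarrow> nat \<Rightarrow> real) \<Rightarrow> (nat \<Rightarrow> real) \<Rightarrow> (nat \<Rightarrow> real) \<Rightarrow> (nat \<Rightarrow> real) \<Rightarrow> nat \<Rightarrow> real" where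
  "coag_rhs a r s x k =
     (1/2) * (\<Sum>l=1..k-1. a (k-l) l * x (k-l) * x l)
     - x k * (\<Sum>l. a k (Suc l) * x (Suc l)) + s k - r k * x k"

definition global_solution ::
  "(nat \<Rightarrow> nat \<Rightarrow> real) \<Rightarrow> (nat \<Rightarrow> real) \<Rightarrow> (nat \<Rightarrow> real) \<Rightarrow> (nat \<Rightarrow> real) \<Rightarrow>
   (real \<Rightarrow> nat \<Rightarrow> real) \<Rightarrow> bool" where
  "global_solution a r s cin c \<longleftrightarrow>
     in_l1 1 cin \<and>
     \<comment> \<open>continuous nonnegative components on [0,infinity)\<close>
     (\<forall>k\<ge>1. continuous_on {0..} (\<lambda>t. c t k) \<and> (\<forall>t\<ge>0. c t k \<ge> 0)) \<and>
     \<comment> \<open>(i) the equation holds for t > 0\<close>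
     (\<forall>k\<ge>1. \<forall>t>0. ((\<lambda>\<tau>. c \<tau> k) has_real_derivative coag_rhs a r s (c t) k) (at t)) \<and>
     \<comment> \<open>(ii) L-infinity([0,infinity), l^1_1)\<close>
     (\<exists>B. \<forall>t\<ge>0. in_l1 1 (c t) \<and> wsum 1 (c t) \<le> B) \<and>
     \<comment> \<open>(ii) C^1((0,infinity), l^1_mu) for every mu >= 1\<close>
     (\<forall>\<mu>\<ge>1. (\<forall>t>0. in_l1 \<mu> (c t)) \<and>
        (\<exists>c'. (\<forall>t>0. l1fin \<mu> (c' t)) \<and>
           (\<forall>t>0. ((\<lambda>h. l1norm \<mu> (\<lambda>k. (c (t+h) k - c t k) / h - c' t k)) \<longlongrightarrow> 0) (at 0)) \<and>
           (\<forall>t>0. ((\<lambda>\<tau>. l1norm \<mu> (\<lambda>k. c' \<tau> k - c' t k)) \<longlongrightarrow> 0) (at t)))) \<and>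
     \<comment> \<open>(iii) initial condition\<close>
     (\<forall>k\<ge>1. c 0 k = cin k)"

end

theory Submission imports Defs begin

text \<open>Let \<open>M\<^sub>n(t) = \<Sum>\<^sub>1\<^sub>\<le>\<^sub>k\<^sub><\<^sub>n k c\<^sub>k(t)\<close> be the truncated first moment. In \<open>M\<^sub>n'\<close> the
  coagulation terms contribute a non-positive amount: the weighted gain only involves pairs
  \<open>(i, j)\<close> with \<open>i + j < n\<close>, and after symmetrising the kernel it is dominated by the loss,
  which runs over all \<open>l\<close>. Since \<open>r\<^sub>k \<ge> R\<^sub>*\<close>, this gives \<open>M\<^sub>n' \<le> s\<^sub>1 - R\<^sub>* M\<^sub>n\<close>, so by Gronwall
  \<open>M\<^sub>n(t) \<le> s\<^sub>1/R\<^sub>* + (m\<^sub>1(0) - s\<^sub>1/R\<^sub>*) exp(-R\<^sub>* t)\<close> uniformly in \<open>n\<close>. Letting \<open>n \<rightarrow> \<infinity>\<close>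
  gives the same bound for \<open>m\<^sub>1(t)\<close>, from which both claims follow. Truncating avoids
  differentiating the infinite sum \<open>m\<^sub>1\<close> term by term.\<close>

definition truncated_moment :: "nat \<Rightarrow> (nat \<Rightarrow> real) \<Rightarrow> real" where
  "truncated_moment n x = (\<Sum>k\<in>{1..<n}. real k * x k)"

lemma truncated_moment_eq_partial_sum:
  "(\<Sum>k<n. real k * x k) = truncated_moment n x"
proof -
  have "(\<Sum>k<n. real k * x k) = (\<Sum>k\<in>{0..<n}. real k * x k)"
    by (simp add: atLeast0LessThan)
  also have "\<dots> = (\<Sum>k\<in>{Suc 0..<n}. real k * x k)"
    by (rule sum_shift_lb_Suc0_0_upt[symmetric]) simp
  finally show ?thesis by (simp add: truncated_moment_def)
qed

lemma truncated_moment_le_moment: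
  assumes "in_l1 1 x"
  shows "truncated_moment n x \<le> moment 1 x"
proof -
  have "\<And>k. 0 \<le> real k powr 1 * x k"
    using assms unfolding in_l1_def by (case_tac "k = 0") auto
  then have "(\<Sum>k<n. real k powr 1 * x k) \<le> moment 1 x"
    using assms unfolding in_l1_def wsum_def by (intro sum_le_suminf) auto
  then show ?thesis by (simp add: truncated_moment_eq_partial_sum[symmetric])
qed

lemma linear_differential_inequality:
  fixes f :: "real \<Rightarrow> real" and R S t :: real
  assumes R: "R > 0" and cont: "continuous_on {0..} f"
    and der: "\<And>\<tau>. \<tau> > 0 \<Longrightarrow> \<exists>y. (f has_real_derivative y) (at \<tau>) \<and> y \<le> S - R * f \<tau>"
    and t: "t \<ge> 0"
  shows "f t \<le> S/R + (f 0 - S/R) * exp (-(R*t))"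
proof -
  define g where "g \<tau> = exp (R*\<tau>) * (f \<tau> - S/R)" for \<tau>
  have "g t \<le> g 0"
  proof (rule DERIV_nonpos_imp_decreasing_open[OF t])
    fix \<tau> assume "0 < \<tau>" "\<tau> < t"
    then obtain y where y: "(f has_real_derivative y) (at \<tau>)" "y \<le> S - R * f \<tau>"
      using der by blast
    have "(g has_real_derivative (R * exp (R*\<tau>) * (f \<tau> - S/R) + exp (R*\<tau>) * y)) (at \<tau>)"
      unfolding g_def by (auto intro!: derivative_eq_intros y(1))
    moreover have "R * exp (R*\<tau>) * (f \<tau> - S/R) + exp (R*\<tau>) * y = exp (R*\<tau>) * (y + R * f \<tau> - S)"
      using R by (simp add: field_simps)
    moreover have "exp (R*\<tau>) * (y + R * f \<tau> - S) \<le> 0"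
      using y(2) by (intro mult_nonneg_nonpos) auto
    ultimately show "\<exists>y. (g has_real_derivative y) (at \<tau>) \<and> y \<le> 0" by metis
  next
    show "continuous_on {0..t} g" unfolding g_def
      by (intro continuous_intros continuous_on_subset[OF cont]) auto
  qed
  then have "f t - S/R \<le> (f 0 - S/R) / exp (R*t)"
    by (simp add: g_def pos_le_divide_eq mult.commute)
  then show ?thesis by (simp add: exp_minus divide_inverse)
qed

lemma weighted_gain_le:
  fixes g :: "nat \<Rightarrow> nat \<Rightarrow> real"
  assumes nonneg: "\<And>i j. 1 \<le> i \<Longrightarrow> 1 \<le> j \<Longrightarrow> 0 \<le> g i j"
    and sym: "\<And>i j. 1 \<le> i \<Longrightarrow> 1 \<le> j \<Longrightarrow> g i j = g j i"
  shows "(\<Sum>k\<in>{1..<n}. real k * (\<Sum>l=1..k-1. g (k-l) l))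
     \<le> 2 * (\<Sum>i\<in>{1..<n}. \<Sum>j\<in>{1..<n}. real i * g i j)"
proof -
  define T where "T = {(i,j). 1 \<le> i \<and> 1 \<le> j \<and> i + j < n}"
  define Q where "Q = {1..<n} \<times> {1..<n}"
  have "(\<Sum>k\<in>{1..<n}. real k * (\<Sum>l=1..k-1. g (k-l) l))
      = (\<Sum>(k,l)\<in>Sigma {1..<n} (\<lambda>k. {1..k-1}). real k * g (k-l) l)"
    by (simp add: sum_distrib_left sum.Sigma)
  also have "\<dots> = (\<Sum>(i,j)\<in>T. real (i+j) * g i j)"
    by (rule sum.reindex_bij_witness[where i="\<lambda>(i,j). (i+j, j)" and j="\<lambda>(k,l). (k-l, l)"])
       (auto simp: T_def)
  also have "\<dots> \<le> (\<Sum>(i,j)\<in>Q. real (i+j) * g i j)"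
    by (rule sum_mono2) (auto simp: T_def Q_def intro!: mult_nonneg_nonneg nonneg)
  also have "\<dots> = (\<Sum>(i,j)\<in>Q. real i * g i j) + (\<Sum>(i,j)\<in>Q. real j * g i j)"
    by (simp add: sum.distrib[symmetric] case_prod_beta algebra_simps)
  also have "(\<Sum>(i,j)\<in>Q. real j * g i j) = (\<Sum>(i,j)\<in>Q. real i * g i j)"
    by (rule sum.reindex_bij_witness[where i="\<lambda>(i,j). (j,i)" and j="\<lambda>(i,j). (j,i)"])
       (auto simp: Q_def sym)
  also have "(\<Sum>(i,j)\<in>Q. real i * g i j) = (\<Sum>i\<in>{1..<n}. \<Sum>j\<in>{1..<n}. real i * g i j)"
    by (simp add: Q_def sum.cartesian_product)
  finally show ?thesis by simp
qed

lemma truncated_loss_le: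
  fixes a x :: "nat \<Rightarrow> real"
  assumes nonneg: "\<And>l. 1 \<le> l \<Longrightarrow> 0 \<le> a l * x l"
    and summable: "summable (\<lambda>l. a (Suc l) * x (Suc l))"
  shows "(\<Sum>j\<in>{1..<n}. a j * x j) \<le> (\<Sum>l. a (Suc l) * x (Suc l))"
proof -
  have "(\<Sum>j\<in>{1..<n}. a j * x j) = (\<Sum>l<n-1. a (Suc l) * x (Suc l))"
  proof (cases n)
    case (Suc m)
    then show ?thesis
      using sum.shift_bounds_Suc_ivl[of "\<lambda>j. a j * x j" 0 m] by (simp add: atLeast0LessThan)
  qed simp
  also have "\<dots> \<le> (\<Sum>l. a (Suc l) * x (Suc l))"
    using nonneg by (intro sum_le_suminf summable) auto
  finally show ?thesis .
qed

lemma truncated_moment_rhs_le: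
  fixes a :: "nat \<Rightarrow> nat \<Rightarrow> real" and r s x :: "nat \<Rightarrow> real"
  assumes kernel: "\<And>k l. 1 \<le> k \<Longrightarrow> 1 \<le> l \<Longrightarrow> a k l = a l k \<and> 0 \<le> a k l"
    and x_nonneg: "\<And>k. 1 \<le> k \<Longrightarrow> 0 \<le> x k"
    and loss_summable: "\<And>k. 1 \<le> k \<Longrightarrow> summable (\<lambda>l. a k (Suc l) * x (Suc l))"
    and rate: "\<And>k. 1 \<le> k \<Longrightarrow> R \<le> r k"
    and source: "(\<Sum>k\<in>{1..<n}. real k * s k) \<le> S"
  shows "(\<Sum>k\<in>{1..<n}. real k * coag_rhs a r s x k) \<le> S - R * truncated_moment n x"
proof -
  define G where "G k = (\<Sum>l=1..k-1. a (k-l) l * x (k-l) * x l)" for k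
  define L where "L k = (\<Sum>l. a k (Suc l) * x (Suc l))" for k
  have split: "(\<Sum>k\<in>{1..<n}. real k * coag_rhs a r s x k)
      = (\<Sum>k\<in>{1..<n}. real k * (1/2 * G k)) - (\<Sum>k\<in>{1..<n}. real k * (x k * L k))
        + (\<Sum>k\<in>{1..<n}. real k * s k) - (\<Sum>k\<in>{1..<n}. real k * (r k * x k))"
    unfolding coag_rhs_def G_def L_def
    by (simp add: sum_subtractf sum.distrib algebra_simps)
  have gain: "(\<Sum>k\<in>{1..<n}. real k * (1/2 * G k)) \<le> (\<Sum>k\<in>{1..<n}. real k * (x k * L k))"
  proof -
    have "(\<Sum>k\<in>{1..<n}. real k * (1/2 * G k)) = 1/2 * (\<Sum>k\<in>{1..<n}. real k * G k)"
      by (simp add: sum_distrib_left algebra_simps)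
    also have "\<dots> \<le> 1/2 * (2 * (\<Sum>i\<in>{1..<n}. \<Sum>j\<in>{1..<n}. real i * (a i j * x i * x j)))"
      unfolding G_def
      by (intro mult_left_mono weighted_gain_le) (auto simp: x_nonneg kernel)
    also have "\<dots> = (\<Sum>i\<in>{1..<n}. real i * x i * (\<Sum>j\<in>{1..<n}. a i j * x j))"
      by (simp add: sum_distrib_left algebra_simps)
    also have "\<dots> \<le> (\<Sum>i\<in>{1..<n}. real i * x i * L i)"
      unfolding L_def
      by (intro sum_mono mult_left_mono truncated_loss_le loss_summable)
         (auto simp: x_nonneg kernel)
    finally show ?thesis by (simp add: algebra_simps)
  qed
  have removal: "R * truncated_moment n x \<le> (\<Sum>k\<in>{1..<n}. real k * (r k * x k))"
    unfolding truncated_moment_def sum_distrib_left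
    using rate x_nonneg by (intro sum_mono) (simp add: mult.left_commute mult_right_mono)
  show ?thesis using split gain source removal by linarith
qed

lemma loss_summable_of_linear_kernel:
  fixes a x :: "nat \<Rightarrow> real"
  assumes kernel: "\<And>l. 1 \<le> l \<Longrightarrow> 0 \<le> a l \<and> a l \<le> C * real l"
    and x_nonneg: "\<And>l. 1 \<le> l \<Longrightarrow> 0 \<le> x l"
    and moment: "summable (\<lambda>l. real l * x l)"
  shows "summable (\<lambda>l. a (Suc l) * x (Suc l))"
proof (rule summable_comparison_test')
  show "summable (\<lambda>l. C * (real (Suc l) * x (Suc l)))"
    using moment by (intro summable_mult summable_Suc_iff[where f="\<lambda>l. real l * x l", THEN iffD2])
  show "norm (a (Suc l) * x (Suc l)) \<le> C * (real (Suc l) * x (Suc l))" for l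
    using kernel[of "Suc l"] x_nonneg[of "Suc l"]
      mult_right_mono[of "a (Suc l)" "C * real (Suc l)" "x (Suc l)"]
    by (simp add: mult.assoc)
qed

lemma standing_assms_kernel_le_linear:
  assumes "standing_assms Astar \<alpha> \<beta> \<gamma> Rstar a r s fs" "1 \<le> k" "1 \<le> l"
  shows "a k l \<le> 2 * Astar * real k * real l"
proof -
  have powr_le: "y powr e \<le> y" if "1 \<le> y" "e \<le> 1" for y e :: real
    using powr_mono[of e 1 y] that by simp
  from assms(1) have "Astar > 0" "\<alpha> \<le> 1" "\<beta> \<le> 1"
    unfolding standing_assms_def by auto
  have "a k l \<le> Astar * (real k powr \<alpha> * real l powr \<beta> + real k powr \<beta> * real l powr \<alpha>)"
    using assms unfolding standing_assms_def by auto
  also have "\<dots> \<le> Astar * (real k * real l + real k * real l)"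
    using \<open>Astar > 0\<close> \<open>\<alpha> \<le> 1\<close> \<open>\<beta> \<le> 1\<close> assms(2,3) powr_le[of "real k"] powr_le[of "real l"]
    by (intro mult_left_mono add_mono mult_mono) auto
  finally show ?thesis by simp
qed

lemma standing_assms_rate_ge:
  assumes "standing_assms Astar \<alpha> \<beta> \<gamma> Rstar a r s fs" "1 \<le> k"
  shows "Rstar \<le> r k"
proof -
  from assms have "Rstar > 0" "\<gamma> > 0" "Rstar * real k powr \<gamma> \<le> r k"
    unfolding standing_assms_def by auto
  moreover have "1 \<le> real k powr \<gamma>"
    using \<open>\<gamma> > 0\<close> assms(2) by (intro ge_one_powr_ge_zero) auto
  ultimately show ?thesis by (smt (verit) mult_le_cancel_left1)
qed

lemma standing_assms_truncated_source_le:
  assumes "standing_assms Astar \<alpha> \<beta> \<gamma> Rstar a r s fs"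
  shows "(\<Sum>k\<in>{1..<n}. real k * s k) \<le> fs 1"
proof -
  from assms have "summable (\<lambda>k. real k powr 1 * s k)" "wsum 1 s \<le> fs 1"
    and "\<forall>k\<ge>1. 0 \<le> s k"
    unfolding standing_assms_def by (metis zero_le_one)+
  moreover have "\<And>k. 0 \<le> real k powr 1 * s k"
    using \<open>\<forall>k\<ge>1. 0 \<le> s k\<close> by (case_tac "k = 0") auto
  ultimately have "(\<Sum>k<n. real k powr 1 * s k) \<le> fs 1"
    unfolding wsum_def by (meson order_trans sum_le_suminf[of _ "{..<n}"] finite_lessThan)
  then show ?thesis by (simp add: truncated_moment_eq_partial_sum truncated_moment_def)
qed

lemma truncated_moment_solution_bound:
  assumes SA: "standing_assms Astar \<alpha> \<beta> \<gamma> Rstar a r s fs"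
    and GS: "global_solution a r s cin c" and t: "t \<ge> 0"
  shows "truncated_moment n (c t)
    \<le> fs 1 / Rstar + (moment 1 cin - fs 1 / Rstar) * exp (-(Rstar * t))"
proof -
  define M where "M \<tau> = truncated_moment n (c \<tau>)" for \<tau>
  from GS have cin: "in_l1 1 cin"
    and cont: "\<And>k. 1 \<le> k \<Longrightarrow> continuous_on {0..} (\<lambda>\<tau>. c \<tau> k)"
    and c_nonneg: "\<And>k \<tau>. 1 \<le> k \<Longrightarrow> 0 \<le> \<tau> \<Longrightarrow> 0 \<le> c \<tau> k"
    and der: "\<And>k \<tau>. 1 \<le> k \<Longrightarrow> 0 < \<tau> \<Longrightarrow>
                ((\<lambda>\<sigma>. c \<sigma> k) has_real_derivative coag_rhs a r s (c \<tau>) k) (at \<tau>)"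
    and initial: "\<And>k. 1 \<le> k \<Longrightarrow> c 0 k = cin k"
    and c_l1: "\<And>\<tau>. 0 \<le> \<tau> \<Longrightarrow> in_l1 1 (c \<tau>)"
    unfolding global_solution_def by blast+
  have R: "Rstar > 0" using SA unfolding standing_assms_def by auto
  have "M t \<le> fs 1 / Rstar + (M 0 - fs 1 / Rstar) * exp (-(Rstar * t))"
  proof (rule linear_differential_inequality[OF R _ _ t])
    show "continuous_on {0..} M" unfolding M_def truncated_moment_def
      by (intro continuous_intros cont) auto
    fix \<tau> :: real assume \<tau>: "\<tau> > 0"
    have "(M has_real_derivative (\<Sum>k\<in>{1..<n}. real k * coag_rhs a r s (c \<tau>) k)) (at \<tau>)"
      unfolding M_def truncated_moment_def by (intro DERIV_sum DERIV_cmult der) (auto simp: \<tau>)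
    moreover have "(\<Sum>k\<in>{1..<n}. real k * coag_rhs a r s (c \<tau>) k) \<le> fs 1 - Rstar * M \<tau>"
      unfolding M_def
    proof (rule truncated_moment_rhs_le)
      show "\<And>k l. 1 \<le> k \<Longrightarrow> 1 \<le> l \<Longrightarrow> a k l = a l k \<and> 0 \<le> a k l"
        using SA unfolding standing_assms_def by auto
      show x_nonneg: "\<And>k. 1 \<le> k \<Longrightarrow> 0 \<le> c \<tau> k" using c_nonneg \<tau> by simp
      show "summable (\<lambda>l. a k (Suc l) * c \<tau> (Suc l))" if "1 \<le> k" for k
      proof (rule loss_summable_of_linear_kernel)
        show "0 \<le> a k l \<and> a k l \<le> 2 * Astar * real k * real l" if "1 \<le> l" for l
          using SA \<open>1 \<le> k\<close> that standing_assms_kernel_le_linear[OF SA \<open>1 \<le> k\<close> that]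
          unfolding standing_assms_def by auto
        show "summable (\<lambda>l. real l * c \<tau> l)" using c_l1[of \<tau>] \<tau> by (simp add: in_l1_def)
      qed (use x_nonneg in auto)
    qed (use standing_assms_rate_ge[OF SA] standing_assms_truncated_source_le[OF SA] in auto)
    ultimately show "\<exists>y. (M has_real_derivative y) (at \<tau>) \<and> y \<le> fs 1 - Rstar * M \<tau>" by blast
  qed
  moreover have "M 0 \<le> moment 1 cin"
    using truncated_moment_le_moment[OF cin, of n] initial
    by (simp add: M_def truncated_moment_def)
  ultimately show ?thesis
    unfolding M_def by (smt (verit) exp_gt_zero mult_right_mono)
qed

lemma first_moment_solution_bound:
  assumes "standing_assms Astar \<alpha> \<beta> \<gamma> Rstar a r s fs"
    and "global_solution a r s cin c" and "t \<ge> 0"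
  shows "moment 1 (c t) \<le> fs 1 / Rstar + (moment 1 cin - fs 1 / Rstar) * exp (-(Rstar * t))"
  unfolding wsum_def[of 1 "c t"]
proof (rule suminf_le_const)
  show "summable (\<lambda>k. real k powr 1 * c t k)"
    using assms(2,3) unfolding global_solution_def in_l1_def by blast
  show "(\<Sum>k<n. real k powr 1 * c t k)
      \<le> fs 1 / Rstar + (moment 1 cin - fs 1 / Rstar) * exp (-(Rstar * t))" for n
    using truncated_moment_solution_bound[OF assms] by (simp add: truncated_moment_eq_partial_sum)
qed

lemma exp_decay_le_after:
  fixes m S R t :: real
  assumes "S > 0" "R > 0" "ln (m / S) / R \<le> t"
  shows "(m - S) * exp (-(R * t)) \<le> S"
proof (cases "m \<le> S")
  case True
  then show ?thesis using \<open>S > 0\<close> by (smt (verit) exp_gt_zero mult_nonpos_nonneg)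
next
  case False
  then have "m > 0" using \<open>S > 0\<close> by simp
  have "ln (m / S) \<le> R * t" using assms by (simp add: pos_divide_le_eq mult.commute)
  then have "exp (-(R * t)) \<le> exp (- ln (m / S))" by simp
  also have "\<dots> = S / m" using \<open>m > 0\<close> \<open>S > 0\<close> by (simp add: exp_minus)
  finally have "(m - S) * exp (-(R * t)) \<le> (m - S) * (S / m)"
    using False by (intro mult_left_mono) auto
  also have "\<dots> \<le> S" using \<open>m > 0\<close> \<open>S > 0\<close> False by (simp add: field_simps)
  finally show ?thesis .
qed

theorem mainTheorem5:
  shows "(\<forall>(Astar::real) (\<alpha>::real) (\<beta>::real) (\<gamma>::real) (Rstar::real)
            (a::nat \<Rightarrow> nat \<Rightarrow> real) (r::nat \<Rightarrow> real) (s::nat \<Rightarrow> real) (fs::real \<Rightarrow> real)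
            (cin::nat \<Rightarrow> real) (c::real \<Rightarrow> nat \<Rightarrow> real) (t::real).
            standing_assms Astar \<alpha> \<beta> \<gamma> Rstar a r s fs \<and> global_solution a r s cin c \<and> t \<ge> 0
            \<longrightarrow> moment 1 (c t) \<le> max (moment 1 cin) (fs 1 / Rstar))
       \<and> (\<exists>Tf :: real \<Rightarrow> real \<Rightarrow> real \<Rightarrow> real.
            \<forall>(Astar::real) (\<alpha>::real) (\<beta>::real) (\<gamma>::real) (Rstar::real)
            (a::nat \<Rightarrow> nat \<Rightarrow> real) (r::nat \<Rightarrow> real) (s::nat \<Rightarrow> real) (fs::real \<Rightarrow> real)
            (cin::nat \<Rightarrow> real) (c::real \<Rightarrow> nat \<Rightarrow> real).
            standing_assms Astar \<alpha> \<beta> \<gamma> Rstar a r s fs \<and> global_solution a r s cin c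
            \<longrightarrow> Tf (moment 1 cin) (fs 1 / Rstar) Rstar > 0 \<and>
                (\<forall>t \<ge> Tf (moment 1 cin) (fs 1 / Rstar) Rstar.
                   moment 1 (c t) \<le> 2 * (fs 1 / Rstar)))"
proof (intro conjI allI impI exI[where x = "\<lambda>m S R. max 1 (ln (m / S) / R)"])
  fix Astar \<alpha> \<beta> \<gamma> Rstar a r s fs cin c and t :: real
  assume H: "standing_assms Astar \<alpha> \<beta> \<gamma> Rstar a r s fs \<and> global_solution a r s cin c \<and> t \<ge> 0"
  then have "exp (-(Rstar * t)) \<le> 1" unfolding standing_assms_def by simp
  with H first_moment_solution_bound[of Astar \<alpha> \<beta> \<gamma> Rstar a r s fs cin c t]
  show "moment 1 (c t) \<le> max (moment 1 cin) (fs 1 / Rstar)"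
    by (smt (verit) exp_gt_zero mult_left_le mult_nonpos_nonneg)
next
  fix Astar \<alpha> \<beta> \<gamma> Rstar a r s fs cin c and t :: real
  assume H: "standing_assms Astar \<alpha> \<beta> \<gamma> Rstar a r s fs \<and> global_solution a r s cin c"
    and T: "t \<ge> max 1 (ln (moment 1 cin / (fs 1 / Rstar)) / Rstar)"
  then have "Rstar > 0" "fs 1 / Rstar > 0" unfolding standing_assms_def by auto
  with T have "(moment 1 cin - fs 1 / Rstar) * exp (-(Rstar * t)) \<le> fs 1 / Rstar"
    by (intro exp_decay_le_after) auto
  with H T first_moment_solution_bound[of Astar \<alpha> \<beta> \<gamma> Rstar a r s fs cin c t]
  show "moment 1 (c t) \<le> 2 * (fs 1 / Rstar)" by auto
qed simp

end
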